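(* For every IFA $\mathcal{A}$ with $n$ states there exists a mod-2-multiplicity automaton $\mathcal{A}'$ with at most $n$ states such that $L_{\mathcal{A}}(w) = L_{\mathcal{A}'}(w)$ for all $w \in \Sigma^*$ (identifying $0,1 \in \mathbb{Q}$ with $0,1 \in \mathbb{Z}_2$).
   Context: For a field $\mathbb{F}$, an $\mathbb{F}$-weighted automaton $\mathcal{A} = (Q, \Sigma, M, \alpha, \eta)$ consists of a finite state set $Q$, finite alphabet $\Sigma$, $M : \Sigma \to \mathbb{F}^{Q\times Q}$, initial row vector $\alpha \in \mathbb{F}^Q$, final column vector $\eta \in \mathbb{F}^Q$; with $M(a_1\cdots a_k) = M(a_1)\cdots M(a_k)$, it assigns $L_\mathcal{A}(w) = \alpha M(w)\eta \in \mathbb{F}$ to each $w \in \Sigma^*$. A $\mathbb{Q}$-weighted automaton is an IFA if $L_\mathcal{A}(w) \in \{0,1\}$ for all $w \in \Sigma^*$. A mod-2-multiplicity automaton is a $\mathbb{Z}_2$-weighted automaton, where $\mathbb{Z}_2 = \{0,1\}$ is the field with two elements; it accepts $w$ iff $L_\mathcal{A}(w) = 1$. The number of states is $|Q|$. *)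

theory Defs
  imports "Jordan_Normal_Form.Matrix" "HOL-Library.Z2"
begin

definition wa_wf :: "nat \<Rightarrow> ('a \<Rightarrow> 'f::field mat) \<Rightarrow> 'f vec \<Rightarrow> 'f vec \<Rightarrow> bool" where
  "wa_wf n M \<alpha> \<eta> \<longleftrightarrow> (\<forall>a. M a \<in> carrier_mat n n) \<and> \<alpha> \<in> carrier_vec n \<and> \<eta> \<in> carrier_vec n"

definition wa_word_mat :: "nat \<Rightarrow> ('a \<Rightarrow> 'f::field mat) \<Rightarrow> 'a list \<Rightarrow> 'f mat" where
  "wa_word_mat n M w = foldr (\<lambda>a B. M a * B) w (1\<^sub>m n)"

definition wa_lang :: "nat \<Rightarrow> ('a \<Rightarrow> 'f::field mat) \<Rightarrow> 'f vec \<Rightarrow> 'f vec \<Rightarrow> 'a list \<Rightarrow> 'f" where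
  "wa_lang n M \<alpha> \<eta> w = \<alpha> \<bullet> (wa_word_mat n M w *\<^sub>v \<eta>)"

definition is_IFA :: "nat \<Rightarrow> ('a \<Rightarrow> rat mat) \<Rightarrow> rat vec \<Rightarrow> rat vec \<Rightarrow> bool" where
  "is_IFA n M \<alpha> \<eta> \<longleftrightarrow> wa_wf n M \<alpha> \<eta> \<and> (\<forall>w. wa_lang n M \<alpha> \<eta> w \<in> {0, 1})"

end

(*
  Let f be the language of the IFA and g its reduction modulo 2. Since
  f (u v) = \<alpha> M(u) \<cdot> M(v) \<eta>, a linear relation among the row vectors \<alpha> M(u_i) \<in> \<rat>^n
  transfers to the rows v \<mapsto> f (u_i v) of the Hankel matrix of f. Any n + 1 such vectors are
  dependent; scaling the relation to integer coefficients, not all even, and reducing modulo 2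
  gives a nontrivial relation among the Hankel rows of g over \<int>\<^sub>2. So the Hankel rank of g
  over \<int>\<^sub>2 is at most n, and a basis of its row space yields a \<int>\<^sub>2-automaton with at most n
  states computing g.
*)

theory Submission
  imports Defs "Jordan_Normal_Form.Determinant"
begin

lemma wa_word_mat_carrier:
  assumes "\<forall>a. M a \<in> carrier_mat n n"
  shows "wa_word_mat n M w \<in> carrier_mat n n"
  using assms by (induction w) (auto simp: wa_word_mat_def intro!: mult_carrier_mat)

lemma wa_word_mat_Cons: "wa_word_mat n M (a # w) = M a * wa_word_mat n M w"
  by (simp add: wa_word_mat_def)

lemma wa_word_mat_append:
  assumes M: "\<forall>a. M a \<in> carrier_mat n n"
  shows "wa_word_mat n M (u @ v) = wa_word_mat n M u * wa_word_mat n M v"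
proof (induction u)
  case Nil
  show ?case using wa_word_mat_carrier[OF M, of v] by (simp add: wa_word_mat_def)
next
  case (Cons a u)
  then show ?case using M wa_word_mat_carrier[OF M]
    by (simp add: wa_word_mat_Cons assoc_mult_mat[of _ n n _ n _ n])
qed

text \<open>The row vector \<open>\<alpha> M(u)\<close>, stored as the column vector \<open>M(u)\<^sup>T \<alpha>\<close>.\<close>

definition wa_row_vec :: "nat \<Rightarrow> ('a \<Rightarrow> 'f::field mat) \<Rightarrow> 'f vec \<Rightarrow> 'a list \<Rightarrow> 'f vec" where
  "wa_row_vec n M \<alpha> u = transpose_mat (wa_word_mat n M u) *\<^sub>v \<alpha>"

lemma wa_lang_append:
  assumes "wa_wf n M \<alpha> \<eta>"
  shows "wa_lang n M \<alpha> \<eta> (u @ v) = wa_row_vec n M \<alpha> u \<bullet> (wa_word_mat n M v *\<^sub>v \<eta>)"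
proof -
  have M: "\<forall>a. M a \<in> carrier_mat n n" and \<alpha>: "\<alpha> \<in> carrier_vec n" and \<eta>: "\<eta> \<in> carrier_vec n"
    using assms by (auto simp: wa_wf_def)
  note carrier = wa_word_mat_carrier[OF M]
  have "wa_lang n M \<alpha> \<eta> (u @ v) = \<alpha> \<bullet> (wa_word_mat n M u *\<^sub>v (wa_word_mat n M v *\<^sub>v \<eta>))"
    unfolding wa_lang_def wa_word_mat_append[OF M] using carrier \<eta>
    by (subst assoc_mult_mat_vec[of _ n n _ n]) auto
  also have "\<dots> = wa_row_vec n M \<alpha> u \<bullet> (wa_word_mat n M v *\<^sub>v \<eta>)"
    unfolding wa_row_vec_def using carrier \<alpha> mult_mat_vec_carrier[OF carrier \<eta>]
    by (intro transpose_vec_mult_scalar[symmetric]) auto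
  finally show ?thesis .
qed

lemma wa_lang_append_lin_comb:
  assumes wf: "wa_wf n M \<alpha> \<eta>"
    and rel: "\<forall>j<n. (\<Sum>i<k. c i * wa_row_vec n M \<alpha> (U i) $ j) = 0"
  shows "(\<Sum>i<k. c i * wa_lang n M \<alpha> \<eta> (U i @ v)) = 0"
proof -
  let ?y = "wa_word_mat n M v *\<^sub>v \<eta>"
  have "dim_vec ?y = n"
    using wf wa_word_mat_carrier[of M n v] by (auto simp: wa_wf_def)
  then have "wa_lang n M \<alpha> \<eta> (u @ v) = (\<Sum>j<n. wa_row_vec n M \<alpha> u $ j * ?y $ j)" for u
    by (simp only: wa_lang_append[OF wf] scalar_prod_def lessThan_atLeast0)
  then have "(\<Sum>i<k. c i * wa_lang n M \<alpha> \<eta> (U i @ v))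
      = (\<Sum>i<k. \<Sum>j<n. c i * wa_row_vec n M \<alpha> (U i) $ j * ?y $ j)"
    by (simp add: sum_distrib_left mult.assoc)
  also have "\<dots> = (\<Sum>j<n. (\<Sum>i<k. c i * wa_row_vec n M \<alpha> (U i) $ j) * ?y $ j)"
    by (subst sum.swap) (simp add: sum_distrib_right)
  also have "\<dots> = 0" using rel by simp
  finally show ?thesis .
qed

definition hankel_rows_indep :: "('a list \<Rightarrow> 'f::field) \<Rightarrow> nat \<Rightarrow> (nat \<Rightarrow> 'a list) \<Rightarrow> bool" where
  "hankel_rows_indep g k U \<longleftrightarrow> (\<forall>c. (\<forall>v. (\<Sum>i<k. c i * g (U i @ v)) = 0) \<longrightarrow> (\<forall>i<k. c i = 0))"

definition hankel_rows_span :: "('a list \<Rightarrow> 'f::field) \<Rightarrow> nat \<Rightarrow> (nat \<Rightarrow> 'a list) \<Rightarrow> bool" where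
  "hankel_rows_span g k U \<longleftrightarrow> (\<forall>w. \<exists>d. \<forall>v. g (w @ v) = (\<Sum>i<k. d i * g (U i @ v)))"

lemma hankel_row_in_span_if_dependent:
  fixes g :: "'a list \<Rightarrow> 'f::field"
  assumes indep: "hankel_rows_indep g K U"
    and dep: "\<not> hankel_rows_indep g (Suc K) (U(K := w))"
  shows "\<exists>d. \<forall>v. g (w @ v) = (\<Sum>i<K. d i * g (U i @ v))"
proof -
  obtain c where "\<forall>v. (\<Sum>i<Suc K. c i * g ((U(K := w)) i @ v)) = 0" and c_nz: "\<exists>i<Suc K. c i \<noteq> 0"
    using dep unfolding hankel_rows_indep_def by blast
  then have rel: "(\<Sum>i<K. c i * g (U i @ v)) + c K * g (w @ v) = 0" for v
    by (simp add: sum.lessThan_Suc)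
  have "c K \<noteq> 0"
  proof
    assume "c K = 0"
    with rel have "\<forall>i<K. c i = 0"
      using indep unfolding hankel_rows_indep_def by simp
    with \<open>c K = 0\<close> c_nz show False by (auto simp: less_Suc_eq)
  qed
  have "g (w @ v) = (\<Sum>i<K. (- c i / c K) * g (U i @ v))" for v
  proof -
    have "g (w @ v) = c K * g (w @ v) / c K" using \<open>c K \<noteq> 0\<close> by simp
    also have "c K * g (w @ v) = - (\<Sum>i<K. c i * g (U i @ v))"
      using rel[of v] by (simp add: eq_neg_iff_add_eq_0 add.commute)
    also have "\<dots> / c K = (\<Sum>i<K. (- c i / c K) * g (U i @ v))"
      by (simp add: sum_divide_distrib sum_negf)
    finally show ?thesis .
  qed
  then show ?thesis by (intro exI[of _ "\<lambda>i. - c i / c K"]) simp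
qed

lemma hankel_rows_span_exists:
  fixes g :: "'a list \<Rightarrow> 'f::field"
  assumes bounded: "\<And>k U. hankel_rows_indep g k U \<Longrightarrow> k \<le> n"
  shows "\<exists>K U. K \<le> n \<and> hankel_rows_span g K U"
proof -
  define indep_sizes where "indep_sizes = {k. \<exists>U. hankel_rows_indep g k U}"
  have "indep_sizes \<subseteq> {..n}" using bounded unfolding indep_sizes_def by auto
  then have fin: "finite indep_sizes" by (rule finite_subset) simp
  have "0 \<in> indep_sizes" unfolding indep_sizes_def hankel_rows_indep_def by simp
  define K where "K = Max indep_sizes"
  have "K \<in> indep_sizes" unfolding K_def using fin \<open>0 \<in> indep_sizes\<close> by (intro Max_in) auto
  then obtain U where U: "hankel_rows_indep g K U" and "K \<le> n"
    using bounded unfolding indep_sizes_def by blast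
  have "Suc K \<notin> indep_sizes" using fin K_def Max_ge Suc_n_not_le_n by metis
  then have "hankel_rows_span g K U"
    unfolding hankel_rows_span_def indep_sizes_def
    using hankel_row_in_span_if_dependent[OF U] by blast
  with \<open>K \<le> n\<close> show ?thesis by blast
qed

text \<open>State \<open>i\<close> stands for the Hankel row of \<open>U i\<close>; the transitions out of it by \<open>a\<close> are the
  coefficients expanding the row of \<open>U i @ [a]\<close>.\<close>

lemma wa_of_hankel_rows_span:
  fixes g :: "'a list \<Rightarrow> 'f::field"
  assumes "hankel_rows_span g K U"
  shows "\<exists>M \<alpha> \<eta>. wa_wf K M \<alpha> \<eta> \<and> (\<forall>w. wa_lang K M \<alpha> \<eta> w = g w)"
proof -
  define coef where "coef w = (SOME d. \<forall>v. g (w @ v) = (\<Sum>i<K. d i * g (U i @ v)))" for w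
  have coef: "g (w @ v) = (\<Sum>i<K. coef w i * g (U i @ v))" for w v
    using someI_ex[of "\<lambda>d. \<forall>v. g (w @ v) = (\<Sum>i<K. d i * g (U i @ v))"] assms
    unfolding coef_def hankel_rows_span_def by blast
  define M where "M a = mat K K (\<lambda>(i, j). coef (U i @ [a]) j)" for a
  define \<alpha> where "\<alpha> = vec K (coef [])"
  define \<eta> where "\<eta> = vec K (\<lambda>j. g (U j))"
  have M: "\<forall>a. M a \<in> carrier_mat K K" unfolding M_def by auto
  have suffix: "wa_word_mat K M w *\<^sub>v \<eta> = vec K (\<lambda>i. g (U i @ w))" for w
  proof (induction w)
    case Nil
    show ?case unfolding \<eta>_def by (simp add: wa_word_mat_def)
  next
    case (Cons a w)
    have "wa_word_mat K M (a # w) *\<^sub>v \<eta> = M a *\<^sub>v vec K (\<lambda>i. g (U i @ w))"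
      unfolding wa_word_mat_Cons Cons[symmetric] using M wa_word_mat_carrier[OF M]
      by (subst assoc_mult_mat_vec[of _ K K _ K]) (auto simp: \<eta>_def)
    also have "\<dots> = vec K (\<lambda>i. g ((U i @ [a]) @ w))"
    proof (rule eq_vecI)
      fix i assume "i < dim_vec (vec K (\<lambda>i. g ((U i @ [a]) @ w)))"
      then have "i < K" by simp
      then have "(M a *\<^sub>v vec K (\<lambda>i. g (U i @ w))) $ i = (\<Sum>j<K. coef (U i @ [a]) j * g (U j @ w))"
        by (auto simp: M_def scalar_prod_def lessThan_atLeast0 intro!: sum.cong)
      with \<open>i < K\<close> show "(M a *\<^sub>v vec K (\<lambda>i. g (U i @ w))) $ i = vec K (\<lambda>i. g ((U i @ [a]) @ w)) $ i"
        by (simp add: coef[symmetric])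
    qed (simp add: M_def)
    finally show ?case by simp
  qed
  have "wa_lang K M \<alpha> \<eta> w = (\<Sum>j<K. coef [] j * g (U j @ w))" for w
    by (simp add: wa_lang_def suffix \<alpha>_def scalar_prod_def lessThan_atLeast0)
  then have "wa_lang K M \<alpha> \<eta> w = g w" for w
    using coef[of "[]" w] by simp
  moreover have "wa_wf K M \<alpha> \<eta>" unfolding wa_wf_def \<alpha>_def \<eta>_def using M by auto
  ultimately show ?thesis by blast
qed

lemma wide_mat_nontrivial_kernel:
  fixes A :: "'f::field mat"
  assumes A: "A \<in> carrier_mat n k" and "n < k"
  shows "\<exists>x \<in> carrier_vec k. x \<noteq> 0\<^sub>v k \<and> A *\<^sub>v x = 0\<^sub>v n"
proof -
  define B where "B = mat\<^sub>r k k (\<lambda>j. if j = n then 0\<^sub>v k else if j < n then row A j else 0\<^sub>v k)"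
  have B: "B \<in> carrier_mat k k" unfolding B_def by simp
  have "det B = 0" unfolding B_def using A by (intro det_row_0 \<open>n < k\<close>) auto
  then obtain x where x: "x \<in> carrier_vec k" "x \<noteq> 0\<^sub>v k" "B *\<^sub>v x = 0\<^sub>v k"
    using det_0_iff_vec_prod_zero_field[OF B] by blast
  have "A *\<^sub>v x = 0\<^sub>v n"
  proof (rule eq_vecI)
    fix j assume "j < dim_vec (0\<^sub>v n :: 'f vec)"
    then have "j < n" by simp
    then have "(A *\<^sub>v x) $ j = (B *\<^sub>v x) $ j" using A \<open>n < k\<close> by (simp add: B_def)
    also have "\<dots> = 0" using \<open>j < n\<close> \<open>n < k\<close> x(3) by simp
    finally show "(A *\<^sub>v x) $ j = 0\<^sub>v n $ j" using \<open>j < n\<close> by simp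
  qed (use A in simp)
  with x show ?thesis by blast
qed

lemma rat_common_denominator:
  fixes x :: "nat \<Rightarrow> rat"
  shows "\<exists>D::int. D > 0 \<and> (\<forall>i<k. x i * of_int D \<in> \<int>)"
proof (intro exI conjI allI impI)
  let ?q = "\<lambda>i. snd (quotient_of (x i))"
  show "(\<Prod>i<k. ?q i) > 0" by (simp add: prod_pos quotient_of_denom_pos')
  fix i assume "i < k"
  then have "(\<Prod>i<k. ?q i) = ?q i * (\<Prod>j\<in>{..<k} - {i}. ?q j)"
    by (simp add: prod.remove)
  moreover obtain p q where pq: "quotient_of (x i) = (p, q)" by force
  then have "x i * of_int (?q i) = of_int p"
    using quotient_of_div[OF pq] quotient_of_denom_pos[OF pq] by simp
  ultimately show "x i * of_int (\<Prod>i<k. ?q i) \<in> \<int>"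
    by (auto simp: mult.assoc[symmetric] intro!: Ints_mult Ints_prod)
qed

lemma int_vec_eq_pow2_times_odd:
  fixes c :: "nat \<Rightarrow> int"
  assumes "\<exists>i<k. c i \<noteq> 0"
  shows "\<exists>e c'. (\<forall>i<k. c i = 2 ^ e * c' i) \<and> (\<exists>i<k. odd (c' i))"
  using assms
proof (induction "\<Sum>i<k. nat \<bar>c i\<bar>" arbitrary: c rule: less_induct)
  case less
  show ?case
  proof (cases "\<exists>i<k. odd (c i)")
    case True
    then show ?thesis by (intro exI[of _ 0] exI[of _ c]) simp
  next
    case False
    let ?h = "\<lambda>i. c i div 2"
    obtain i0 where i0: "i0 < k" "c i0 \<noteq> 0" using less.prems by blast
    have "nat \<bar>?h i\<bar> \<le> nat \<bar>c i\<bar>" for i by (simp add: nat_le_eq_zle)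
    moreover have "nat \<bar>?h i0\<bar> < nat \<bar>c i0\<bar>" using i0 False by (auto elim!: evenE)
    ultimately have "(\<Sum>i<k. nat \<bar>?h i\<bar>) < (\<Sum>i<k. nat \<bar>c i\<bar>)"
      using i0 by (intro sum_strict_mono_ex1) auto
    moreover have "\<exists>i<k. ?h i \<noteq> 0" using i0 False by (intro exI[of _ i0]) (auto elim!: evenE)
    ultimately obtain e c' where "\<forall>i<k. ?h i = 2 ^ e * c' i" "\<exists>i<k. odd (c' i)"
      using less.hyps[of ?h] by blast
    moreover have "\<forall>i<k. c i = 2 * ?h i" using False by simp
    ultimately show ?thesis by (intro exI[of _ "Suc e"] exI[of _ c']) auto
  qed
qed

lemma rat_vec_multiple_int_with_odd_entry:
  fixes x :: "nat \<Rightarrow> rat"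
  assumes "\<exists>i<k. x i \<noteq> 0"
  shows "\<exists>r c. (\<forall>i<k. of_int (c i) = r * x i) \<and> (\<exists>i<k. odd (c i))"
proof -
  obtain D :: int where "D > 0" and D: "\<forall>i<k. x i * of_int D \<in> \<int>"
    using rat_common_denominator by blast
  define c0 where "c0 i = \<lfloor>x i * of_int D\<rfloor>" for i
  have c0: "of_int (c0 i) = x i * of_int D" if "i < k" for i
    using D that by (simp add: c0_def of_int_floor)
  obtain i0 where "i0 < k" "x i0 \<noteq> 0" using assms by blast
  then have "c0 i0 \<noteq> 0" using c0[of i0] \<open>D > 0\<close> by auto
  then obtain e c where e: "\<forall>i<k. c0 i = 2 ^ e * c i" and odd: "\<exists>i<k. odd (c i)"
    using int_vec_eq_pow2_times_odd \<open>i0 < k\<close> by blast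
  have "of_int (c i) = (of_int D / 2 ^ e) * x i" if "i < k" for i
  proof -
    have "2 ^ e * of_int (c i) = x i * of_int D" using c0[OF that] e that by simp
    then show ?thesis by (simp add: field_simps)
  qed
  with odd show ?thesis by blast
qed

lemma bit_of_int_eq_0_iff: "(of_int k :: bit) = 0 \<longleftrightarrow> even k"
  by (metis bit.exhaust even_of_int_iff even_zero odd_one)

lemma hankel_rows_indep_mod2_le_states:
  fixes b :: "'a list \<Rightarrow> int" and M :: "'a \<Rightarrow> rat mat"
  assumes wf: "wa_wf n M \<alpha> \<eta>" and lang: "\<forall>w. wa_lang n M \<alpha> \<eta> w = of_int (b w)"
    and indep: "hankel_rows_indep (\<lambda>w. of_int (b w) :: bit) k U"
  shows "k \<le> n"
proof (rule ccontr)
  assume "\<not> k \<le> n"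
  define A where "A = mat n k (\<lambda>(j, i). wa_row_vec n M \<alpha> (U i) $ j)"
  obtain x where x: "x \<in> carrier_vec k" "x \<noteq> 0\<^sub>v k" "A *\<^sub>v x = 0\<^sub>v n"
    using wide_mat_nontrivial_kernel[of A n k] \<open>\<not> k \<le> n\<close> by (auto simp: A_def)
  have "\<exists>i<k. x $ i \<noteq> 0" using x(1,2) by auto
  then obtain r c where c: "\<forall>i<k. of_int (c i) = r * x $ i" and odd: "\<exists>i<k. odd (c i)"
    using rat_vec_multiple_int_with_odd_entry[of k "\<lambda>i. x $ i"] by blast
  have "\<forall>j<n. (\<Sum>i<k. of_int (c i) * wa_row_vec n M \<alpha> (U i) $ j) = 0"
  proof (intro allI impI)
    fix j assume "j < n"
    have "(\<Sum>i<k. of_int (c i) * wa_row_vec n M \<alpha> (U i) $ j) = r * (A *\<^sub>v x) $ j"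
      using \<open>j < n\<close> x(1) c
      by (simp add: A_def scalar_prod_def lessThan_atLeast0 sum_distrib_left mult_ac)
    then show "(\<Sum>i<k. of_int (c i) * wa_row_vec n M \<alpha> (U i) $ j) = 0"
      using \<open>j < n\<close> x(3) by simp
  qed
  from wa_lang_append_lin_comb[OF wf this]
  have "rat_of_int (\<Sum>i<k. c i * b (U i @ v)) = 0" for v
    using lang by simp
  then have "(\<Sum>i<k. c i * b (U i @ v)) = 0" for v
    by (simp only: of_int_eq_0_iff)
  then have "(\<Sum>i<k. of_int (c i) * (of_int (b (U i @ v)) :: bit)) = 0" for v
    unfolding of_int_mult[symmetric] of_int_sum[symmetric] by simp
  then have "\<forall>i<k. (of_int (c i) :: bit) = 0"
    using indep[unfolded hankel_rows_indep_def, THEN spec, of "\<lambda>i. of_int (c i)"] by meson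
  then have "\<forall>i<k. even (c i)" unfolding bit_of_int_eq_0_iff .
  with odd show False by blast
qed

theorem proposition6:
  fixes n :: nat and M :: "'a::finite \<Rightarrow> rat mat" and \<alpha> \<eta> :: "rat vec"
  assumes "is_IFA n M \<alpha> \<eta>"
  shows "\<exists>m M' \<alpha>' \<eta>'. m \<le> n \<and> wa_wf m (M' :: 'a \<Rightarrow> bit mat) \<alpha>' \<eta>' \<and>
           (\<forall>w. wa_lang n M \<alpha> \<eta> w = (if wa_lang m M' \<alpha>' \<eta>' w = 1 then 1 else 0))"
proof -
  have wf: "wa_wf n M \<alpha> \<eta>" and lang01: "\<forall>w. wa_lang n M \<alpha> \<eta> w \<in> {0, 1}"
    using assms by (auto simp: is_IFA_def)
  define b :: "'a list \<Rightarrow> int" where "b w = (if wa_lang n M \<alpha> \<eta> w = 1 then 1 else 0)" for w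
  have lang: "\<forall>w. wa_lang n M \<alpha> \<eta> w = of_int (b w)" using lang01 by (auto simp: b_def)
  let ?g = "\<lambda>w. of_int (b w) :: bit"
  obtain K U where "K \<le> n" and span: "hankel_rows_span ?g K U"
    using hankel_rows_span_exists hankel_rows_indep_mod2_le_states[OF wf lang] by blast
  obtain M' \<alpha>' \<eta>' where wf': "wa_wf K M' \<alpha>' \<eta>'" and lang': "\<forall>w. wa_lang K M' \<alpha>' \<eta>' w = ?g w"
    using wa_of_hankel_rows_span[OF span] by blast
  have "wa_lang n M \<alpha> \<eta> w = (if wa_lang K M' \<alpha>' \<eta>' w = 1 then 1 else 0)" for w
    using lang01 lang' by (auto simp: b_def)
  with \<open>K \<le> n\<close> wf' show ?thesis by blast
qed

end
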